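(* Let $W,M$ be disjoint with $|W|=|M|=n$ and let $(w,m)\in W\times M$ be fixed. Both the nondeterministic and the co-nondeterministic two-party communication complexities of determining whether $(w,m)$ is married in some (respectively, every) stable marriage of $(W,M,\succ_W,\succ_M)$, where Alice holds the women's full preference profile $\succ_W$ and Bob holds the men's full preference profile $\succ_M$, are $\Omega(n^2)$.
   Context: A full preference profile of the women gives each woman a total order on $M$; that of the men gives each man a total order on $W$. A perfect marriage is a bijection between $W$ and $M$. A pair $(w,m)$ is blocking for $\mu$ if $w$ prefers $m$ to her spouse in $\mu$ and $m$ prefers $w$ to his spouse in $\mu$; $\mu$ is stable if it has no blocking pair. Nondeterministic communication complexity of a Boolean function is the minimum, over protocols with a guessed certificate, of the worst-case number of bits (including certificate) needed so that accepting computations exist exactly on $1$-inputs; co-nondeterministic complexity is the nondeterministic complexity of the negated function. Bounds are asymptotic in $n$. *)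

theory Defs
  imports Complex_Main
begin

datatype ('a, 'b) protocol =
    Output bool
  | AliceSends "'a \<Rightarrow> bool" "('a, 'b) protocol" "('a, 'b) protocol"
  | BobSends "'b \<Rightarrow> bool" "('a, 'b) protocol" "('a, 'b) protocol"

fun run :: "('a, 'b) protocol \<Rightarrow> 'a \<Rightarrow> 'b \<Rightarrow> bool" where
  "run (Output v) x y = v"
| "run (AliceSends f P0 P1) x y = (if f x then run P1 x y else run P0 x y)"
| "run (BobSends g P0 P1) x y = (if g y then run P1 x y else run P0 x y)"

fun depth :: "('a, 'b) protocol \<Rightarrow> nat" where
  "depth (Output v) = 0"
| "depth (AliceSends f P0 P1) = Suc (max (depth P0) (depth P1))"
| "depth (BobSends g P0 P1) = Suc (max (depth P0) (depth P1))"

text \<open>Nondeterministic protocol: a guessed certificate z of k bits, seen by both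
players, followed by a deterministic protocol.\<close>

definition nd_computes ::
  "'a set \<Rightarrow> 'b set \<Rightarrow> ('a \<Rightarrow> 'b \<Rightarrow> bool) \<Rightarrow> nat \<Rightarrow> ('a \<times> bool list, 'b \<times> bool list) protocol \<Rightarrow> bool" where
  "nd_computes X Y f k P \<longleftrightarrow>
     (\<forall>x\<in>X. \<forall>y\<in>Y. f x y \<longleftrightarrow> (\<exists>z. length z = k \<and> run P (x, z) (y, z)))"

definition nd_cost_le :: "'a set \<Rightarrow> 'b set \<Rightarrow> ('a \<Rightarrow> 'b \<Rightarrow> bool) \<Rightarrow> nat \<Rightarrow> bool" where
  "nd_cost_le X Y f c \<longleftrightarrow> (\<exists>k P. nd_computes X Y f k P \<and> k + depth P \<le> c)"

definition ncc :: "'a set \<Rightarrow> 'b set \<Rightarrow> ('a \<Rightarrow> 'b \<Rightarrow> bool) \<Rightarrow> nat" where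
  "ncc X Y f = (LEAST c. nd_cost_le X Y f c)"

definition concc :: "'a set \<Rightarrow> 'b set \<Rightarrow> ('a \<Rightarrow> 'b \<Rightarrow> bool) \<Rightarrow> nat" where
  "concc X Y f = ncc X Y (\<lambda>x y. \<not> f x y)"

text \<open>A preference profile of agents in A over B: for each a \<in> A a strict total
order p a on B; (b1, b2) \<in> p a means a prefers b1 to b2. Outside A the relation
is empty (so that profiles are determined by their values on A).\<close>

definition profiles :: "'x set \<Rightarrow> 'y set \<Rightarrow> ('x \<Rightarrow> ('y \<times> 'y) set) set" where
  "profiles A B = {p. (\<forall>a\<in>A. strict_linear_order_on B (p a)) \<and> (\<forall>a. a \<notin> A \<longrightarrow> p a = {})}"

definition blocking ::
  "'x set \<Rightarrow> 'y set \<Rightarrow> ('x \<Rightarrow> ('y \<times> 'y) set) \<Rightarrow> ('y \<Rightarrow> ('x \<times> 'x) set) \<Rightarrow> ('x \<Rightarrow> 'y) \<Rightarrow> 'x \<Rightarrow> 'y \<Rightarrow> bool" where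
  "blocking W M pW pM mu w m \<longleftrightarrow>
     w \<in> W \<and> m \<in> M \<and> (m, mu w) \<in> pW w \<and> (w, inv_into W mu m) \<in> pM m"

definition stable ::
  "'x set \<Rightarrow> 'y set \<Rightarrow> ('x \<Rightarrow> ('y \<times> 'y) set) \<Rightarrow> ('y \<Rightarrow> ('x \<times> 'x) set) \<Rightarrow> ('x \<Rightarrow> 'y) \<Rightarrow> bool" where
  "stable W M pW pM mu \<longleftrightarrow>
     bij_betw mu W M \<and> (\<forall>w\<in>W. \<forall>m\<in>M. \<not> blocking W M pW pM mu w m)"

definition married_in_some ::
  "'x set \<Rightarrow> 'y set \<Rightarrow> 'x \<Rightarrow> 'y \<Rightarrow> ('x \<Rightarrow> ('y \<times> 'y) set) \<Rightarrow> ('y \<Rightarrow> ('x \<times> 'x) set) \<Rightarrow> bool" where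
  "married_in_some W M w m pW pM \<longleftrightarrow> (\<exists>mu. stable W M pW pM mu \<and> mu w = m)"

definition married_in_every ::
  "'x set \<Rightarrow> 'y set \<Rightarrow> 'x \<Rightarrow> 'y \<Rightarrow> ('x \<Rightarrow> ('y \<times> 'y) set) \<Rightarrow> ('y \<Rightarrow> ('x \<times> 'x) set) \<Rightarrow> bool" where
  "married_in_every W M w m pW pM \<longleftrightarrow> (\<forall>mu. stable W M pW pM mu \<longrightarrow> mu w = m)"

end

theory Submission
  imports Defs "HOL-Library.Product_Lexorder" "HOL-Combinatorics.Transposition"
begin

text \<open>Set disjointness on a universe U has nondeterministic complexity at least |U| - 1: the inputs
  (A, U - A) form a fooling set. With k = (n - 2) div 2, Alice encodes A \<subseteq> {..<k} \<times> {..<k} in the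
  women's preferences and Bob encodes B in the men's, through two families of profiles
  in which every stable marriage pairs w with m iff A \<inter> B = {}, respectively iff A \<inter> B \<noteq> {}.
  Stable marriages exist (deferred acceptance), so on these profiles "married in some" and
  "married in every" coincide, and all four functions inherit the bound k * k - 1.\<close>

section \<open>Fooling sets for nondeterministic protocols\<close>

fun transcript :: "('a, 'b) protocol \<Rightarrow> 'a \<Rightarrow> 'b \<Rightarrow> bool list" where
  "transcript (Output v) x y = []"
| "transcript (AliceSends f P0 P1) x y = f x # transcript (if f x then P1 else P0) x y"
| "transcript (BobSends g P0 P1) x y = g y # transcript (if g y then P1 else P0) x y"

lemma length_transcript_le_depth: "length (transcript P x y) \<le> depth P"
  by (induction P) auto

lemma run_eq_if_transcript_eq:
  "transcript P x y = transcript P x' y' \<Longrightarrow> run P x y' = run P x y"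
  by (induction P) (auto split: if_splits)

lemma card_bool_lists_length_le: "card {xs :: bool list. length xs \<le> d} < 2 ^ Suc d"
proof -
  have "card {xs :: bool list. length xs \<le> d} = (\<Sum>i\<le>d. 2 ^ i)"
    using card_lists_length_le[of "UNIV :: bool set" d] by simp
  also have "\<dots> < 2 ^ Suc d"
    by (induction d) auto
  finally show ?thesis .
qed

lemma nd_fooling_set:
  assumes P: "nd_computes X Y g k P"
    and F: "F \<subseteq> X \<times> Y" "\<And>x y. (x, y) \<in> F \<Longrightarrow> g x y"
    and fooling: "\<And>x y x' y'. (x, y) \<in> F \<Longrightarrow> (x', y') \<in> F \<Longrightarrow> g x y' \<Longrightarrow> g x' y \<Longrightarrow> (x, y) = (x', y')"
  shows "card F < 2 ^ (k + Suc (depth P))"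
proof -
  have "\<exists>z. length z = k \<and> run P (x, z) (y, z)" if "(x, y) \<in> F" for x y
    using P F that unfolding nd_computes_def by blast
  then obtain cert where cert: "\<And>x y. (x, y) \<in> F \<Longrightarrow> length (cert x y) = k \<and> run P (x, cert x y) (y, cert x y)"
    by metis
  define h where "h = (\<lambda>(x, y). (cert x y, transcript P (x, cert x y) (y, cert x y)))"
  have accept_cross: "g x y'" if "(x, y) \<in> F" "(x', y') \<in> F" "h (x, y) = h (x', y')" for x y x' y'
  proof -
    from that have "cert x y = cert x' y'" and
      "transcript P (x, cert x y) (y, cert x y) = transcript P (x', cert x y) (y', cert x y)"
      unfolding h_def by auto
    then have "run P (x, cert x y) (y', cert x y)"
      using run_eq_if_transcript_eq cert[OF that(1)] by metis
    then show "g x y'"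
      using P F that cert unfolding nd_computes_def by blast
  qed
  have "inj_on h F"
    by (rule inj_onI) (use accept_cross fooling in fastforce)
  moreover have "h ` F \<subseteq> {z. length z = k} \<times> {t. length t \<le> depth P}"
    using cert length_transcript_le_depth unfolding h_def by auto
  moreover have "finite ({z :: bool list. length z = k} \<times> {t :: bool list. length t \<le> depth P})"
    using finite_lists_length_eq[of "UNIV :: bool set" k] finite_lists_length_le[of "UNIV :: bool set" "depth P"]
    by simp
  ultimately have "card F \<le> card ({z :: bool list. length z = k} \<times> {t :: bool list. length t \<le> depth P})"
    by (rule card_inj_on_le)
  also have "\<dots> < 2 ^ k * 2 ^ Suc (depth P)"
    using card_bool_lists_length_le[of "depth P"] card_lists_length_eq[of "UNIV :: bool set" k]
    by (simp add: card_cartesian_product)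
  finally show ?thesis
    by (simp add: power_add)
qed

lemma nd_cost_le_of_finite_range:
  assumes "finite (c ` X)" and cong: "\<And>x x' y. x \<in> X \<Longrightarrow> x' \<in> X \<Longrightarrow> c x = c x' \<Longrightarrow> g x y = g x' y"
  shows "\<exists>cost. nd_cost_le X Y g cost"
proof -
  let ?V = "c ` X"
  have "card ?V \<le> card {z :: bool list. length z = card ?V}"
    using card_lists_length_eq[of "UNIV :: bool set" "card ?V"] by (simp add: less_imp_le)
  then obtain enc where enc: "inj_on enc ?V" "enc ` ?V \<subseteq> {z :: bool list. length z = card ?V}"
    using card_le_inj[OF assms(1), of "{z :: bool list. length z = card ?V}"]
      finite_lists_length_eq[of "UNIV :: bool set" "card ?V"] by auto
  define dec where "dec = inv_into ?V enc"
  \<comment> \<open>The certificate names the class c x of Alice's input; Alice checks it, and Bob evaluates g on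
    a representative of that class.\<close>
  define P where
    "P = AliceSends (\<lambda>(x, z). c x = dec z) (Output False)
           (BobSends (\<lambda>(y, z). g (inv_into X c (dec z)) y) (Output False) (Output True))"
  have rep: "g (inv_into X c (c x)) y = g x y" if "x \<in> X" for x y
    using that by (intro cong) (auto intro: inv_into_into f_inv_into_f)
  have "nd_computes X Y g (card ?V) P"
    unfolding nd_computes_def
  proof (intro ballI iffI)
    fix x y assume "x \<in> X" "g x y"
    moreover have "dec (enc (c x)) = c x"
      unfolding dec_def using enc(1) \<open>x \<in> X\<close> by simp
    moreover have "length (enc (c x)) = card ?V"
      using enc(2) \<open>x \<in> X\<close> by blast
    ultimately show "\<exists>z. length z = card ?V \<and> run P (x, z) (y, z)"
      using rep by (intro exI[of _ "enc (c x)"]) (simp add: P_def)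
  next
    fix x y assume "x \<in> X" "\<exists>z. length z = card ?V \<and> run P (x, z) (y, z)"
    then obtain z where "c x = dec z" "g (inv_into X c (dec z)) y"
      by (auto simp: P_def split: if_splits)
    then show "g x y"
      using rep[OF \<open>x \<in> X\<close>] by simp
  qed
  then show ?thesis
    unfolding nd_cost_le_def by blast
qed

lemma nd_cost_ge_disjointness:
  assumes "finite U" and cost: "nd_cost_le X Y g cost"
    and xf: "\<And>A. A \<subseteq> U \<Longrightarrow> xf A \<in> X" and yf: "\<And>B. B \<subseteq> U \<Longrightarrow> yf B \<in> Y"
    and disj: "\<And>A B. A \<subseteq> U \<Longrightarrow> B \<subseteq> U \<Longrightarrow> g (xf A) (yf B) \<longleftrightarrow> A \<inter> B = {}"
  shows "card U \<le> cost + 1"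
proof -
  obtain k P where P: "nd_computes X Y g k P" and "k + depth P \<le> cost"
    using cost unfolding nd_cost_le_def by blast
  define F where "F = (\<lambda>A. (xf A, yf (U - A))) ` Pow U"
  have sub: "A \<subseteq> A'" if "A \<subseteq> U" "A' \<subseteq> U" "g (xf A) (yf (U - A'))" for A A'
    using that disj[of A "U - A'"] by auto
  have "inj_on (\<lambda>A. (xf A, yf (U - A))) (Pow U)"
  proof (rule inj_onI)
    fix A A' assume U: "A \<in> Pow U" "A' \<in> Pow U" and eq: "(xf A, yf (U - A)) = (xf A', yf (U - A'))"
    have "g (xf A) (yf (U - A'))" "g (xf A') (yf (U - A))"
      using eq U disj[of A "U - A"] disj[of A' "U - A'"] by auto
    then show "A = A'"
      using U sub by blast
  qed
  then have "2 ^ card U = card F"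
    unfolding F_def using \<open>finite U\<close> by (simp add: card_image card_Pow)
  also have "\<dots> < 2 ^ (k + Suc (depth P))"
  proof (rule nd_fooling_set[OF P])
    show "F \<subseteq> X \<times> Y" "\<And>x y. (x, y) \<in> F \<Longrightarrow> g x y"
      unfolding F_def using xf yf disj by auto
    fix x y x' y' assume "(x, y) \<in> F" "(x', y') \<in> F" "g x y'" "g x' y"
    then obtain A A' where "A \<subseteq> U" "A' \<subseteq> U" "(x, y) = (xf A, yf (U - A))" "(x', y') = (xf A', yf (U - A'))"
      "g (xf A) (yf (U - A'))" "g (xf A') (yf (U - A))"
      unfolding F_def by auto
    then show "(x, y) = (x', y')"
      using sub subset_antisym by metis
  qed
  finally have "card U < k + Suc (depth P)"
    by (rule power_less_imp_less_exp[rotated]) simp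
  then show ?thesis
    using \<open>k + depth P \<le> cost\<close> by simp
qed

lemma ncc_ge_disjointness:
  assumes "finite U" and "finite (c ` X)"
    and cong: "\<And>x x' y. x \<in> X \<Longrightarrow> x' \<in> X \<Longrightarrow> c x = c x' \<Longrightarrow> g x y = g x' y"
    and "\<And>A. A \<subseteq> U \<Longrightarrow> xf A \<in> X" "\<And>B. B \<subseteq> U \<Longrightarrow> yf B \<in> Y"
    and "\<And>A B. A \<subseteq> U \<Longrightarrow> B \<subseteq> U \<Longrightarrow> g (xf A) (yf B) \<longleftrightarrow> A \<inter> B = {}"
  shows "card U \<le> ncc X Y g + 1"
proof (rule nd_cost_ge_disjointness[OF \<open>finite U\<close> _ assms(4-6)])
  show "nd_cost_le X Y g (ncc X Y g)"
    unfolding ncc_def using nd_cost_le_of_finite_range[OF \<open>finite (c ` X)\<close> cong] by (rule LeastI_ex)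
qed

section \<open>Existence of stable marriages\<close>

lemma strict_linear_order_onD:
  assumes "strict_linear_order_on B r"
  shows strict_linear_order_on_irrefl: "(x, x) \<notin> r"
    and strict_linear_order_on_trans: "(x, y) \<in> r \<Longrightarrow> (y, z) \<in> r \<Longrightarrow> (x, z) \<in> r"
    and strict_linear_order_on_asym: "(x, y) \<in> r \<Longrightarrow> (y, x) \<notin> r"
    and strict_linear_order_on_total: "x \<in> B \<Longrightarrow> y \<in> B \<Longrightarrow> x \<noteq> y \<Longrightarrow> (x, y) \<in> r \<or> (y, x) \<in> r"
  using assms unfolding strict_linear_order_on_def irrefl_def trans_def total_on_def by blast+

definition best :: "('a \<times> 'a) set \<Rightarrow> 'a set \<Rightarrow> 'a" where
  "best r S = (THE x. x \<in> S \<and> (\<forall>y\<in>S. y \<noteq> x \<longrightarrow> (x, y) \<in> r))"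

lemma best_exists:
  assumes r: "strict_linear_order_on B r" and "finite S" "S \<noteq> {}" "S \<subseteq> B"
  shows "\<exists>x\<in>S. \<forall>y\<in>S. y \<noteq> x \<longrightarrow> (x, y) \<in> r"
  using assms(2-)
proof (induction S rule: finite_ne_induct)
  case (insert a F)
  then obtain x where x: "x \<in> F" "\<forall>y\<in>F. y \<noteq> x \<longrightarrow> (x, y) \<in> r"
    by auto
  show ?case
  proof (cases "(a, x) \<in> r")
    case True
    then show ?thesis
      using x strict_linear_order_on_trans[OF r] by (intro bexI[of _ a]) auto
  next
    case False
    then have "(x, a) \<in> r"
      using strict_linear_order_on_total[OF r, of a x] x insert by auto
    then show ?thesis
      using x by (intro bexI[of _ x]) auto
  qed
qed simp

lemma best_in_and_preferred:
  assumes r: "strict_linear_order_on B r" and "finite S" "S \<noteq> {}" "S \<subseteq> B"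
  shows "best r S \<in> S" and "\<And>y. y \<in> S \<Longrightarrow> y \<noteq> best r S \<Longrightarrow> (best r S, y) \<in> r"
proof -
  obtain x where x: "x \<in> S" "\<forall>y\<in>S. y \<noteq> x \<longrightarrow> (x, y) \<in> r"
    using best_exists[OF assms] by blast
  have "best r S = x"
    unfolding best_def
  proof (rule the_equality)
    show "x \<in> S \<and> (\<forall>y\<in>S. y \<noteq> x \<longrightarrow> (x, y) \<in> r)"
      using x by blast
  next
    fix x' assume x': "x' \<in> S \<and> (\<forall>y\<in>S. y \<noteq> x' \<longrightarrow> (x', y) \<in> r)"
    show "x' = x"
    proof (rule ccontr)
      assume "x' \<noteq> x"
      then have "(x, x') \<in> r" "(x', x) \<in> r"
        using x x' by auto
      then show False
        using strict_linear_order_on_asym[OF r] by simp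
    qed
  qed
  then show "best r S \<in> S" and "\<And>y. y \<in> S \<Longrightarrow> y \<noteq> best r S \<Longrightarrow> (best r S, y) \<in> r"
    using x by auto
qed

text \<open>Deferred acceptance: P m is the set of women that man m has not yet been rejected by, and m
  proposes to his favourite among them. The invariant says that whoever rejected m holds a proposal
  she prefers to m.\<close>

definition proposal :: "('y \<Rightarrow> ('x \<times> 'x) set) \<Rightarrow> ('y \<Rightarrow> 'x set) \<Rightarrow> 'y \<Rightarrow> 'x" where
  "proposal pM P m = best (pM m) (P m)"

definition deferred_acceptance_inv ::
  "'x set \<Rightarrow> 'y set \<Rightarrow> ('x \<Rightarrow> ('y \<times> 'y) set) \<Rightarrow> ('y \<Rightarrow> ('x \<times> 'x) set) \<Rightarrow> ('y \<Rightarrow> 'x set) \<Rightarrow> bool" where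
  "deferred_acceptance_inv W M pW pM P \<longleftrightarrow> (\<forall>m\<in>M. P m \<subseteq> W) \<and>
     (\<forall>m\<in>M. \<forall>w\<in>W. w \<notin> P m \<longrightarrow>
        (\<exists>m'\<in>M. P m' \<noteq> {} \<and> proposal pM P m' = w \<and> (m', m) \<in> pW w))"

context
  fixes W :: "'x set" and M :: "'y set" and pW pM
  assumes finite_W: "finite W" and finite_M: "finite M" and card_eq: "card W = card M"
    and pW_profile: "pW \<in> profiles W M" and pM_profile: "pM \<in> profiles M W"
begin

lemma strict_linear_order_on_pW: "w \<in> W \<Longrightarrow> strict_linear_order_on M (pW w)"
  using pW_profile unfolding profiles_def by auto

lemma strict_linear_order_on_pM: "m \<in> M \<Longrightarrow> strict_linear_order_on W (pM m)"
  using pM_profile unfolding profiles_def by auto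

lemma deferred_acceptance_inv_nonempty:
  assumes I: "deferred_acceptance_inv W M pW pM P" and m: "m \<in> M"
  shows "P m \<noteq> {}"
proof
  assume empty: "P m = {}"
  \<comment> \<open>then every woman holds a proposal, and from distinct men other than m\<close>
  then have "\<exists>m'. m' \<in> M \<and> P m' \<noteq> {} \<and> proposal pM P m' = w" if "w \<in> W" for w
    using I that m unfolding deferred_acceptance_inv_def by blast
  then obtain f where f: "\<And>w. w \<in> W \<Longrightarrow> f w \<in> M \<and> P (f w) \<noteq> {} \<and> proposal pM P (f w) = w"
    by metis
  have "inj_on f W"
    by (rule inj_onI) (metis f)
  moreover have "f ` W \<subseteq> M - {m}"
    using f empty by fastforce
  ultimately have "card W \<le> card (M - {m})"
    using card_inj_on_le finite_M by blast
  also have "\<dots> < card M"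
    using finite_M m by (rule card_Diff1_less)
  finally show False
    using card_eq by simp
qed

lemma proposal_best:
  assumes I: "deferred_acceptance_inv W M pW pM P" and m: "m \<in> M"
  shows "proposal pM P m \<in> P m" and "\<And>w. w \<in> P m \<Longrightarrow> w \<noteq> proposal pM P m \<Longrightarrow> (proposal pM P m, w) \<in> pM m"
proof -
  have "P m \<subseteq> W"
    using I m unfolding deferred_acceptance_inv_def by auto
  note best = best_in_and_preferred[OF strict_linear_order_on_pM[OF m]
      finite_subset[OF this finite_W] deferred_acceptance_inv_nonempty[OF I m] this]
  show "proposal pM P m \<in> P m" and "\<And>w. w \<in> P m \<Longrightarrow> w \<noteq> proposal pM P m \<Longrightarrow> (proposal pM P m, w) \<in> pM m"
    unfolding proposal_def using best by auto
qed

lemma proposal_in_W: "deferred_acceptance_inv W M pW pM P \<Longrightarrow> m \<in> M \<Longrightarrow> proposal pM P m \<in> W"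
  using proposal_best(1) unfolding deferred_acceptance_inv_def by blast

lemma stable_if_proposals_inj:
  assumes I: "deferred_acceptance_inv W M pW pM P" and inj: "inj_on (proposal pM P) M"
  shows "stable W M pW pM (inv_into M (proposal pM P))"
proof -
  let ?t = "proposal pM P" and ?mu = "inv_into M (proposal pM P)"
  have "?t ` M = W"
    using card_subset_eq[OF finite_W] card_image[OF inj] card_eq proposal_in_W[OF I] by (metis image_subsetI)
  then have t: "bij_betw ?t M W"
    using inj unfolding bij_betw_def by simp
  have "\<not> blocking W M pW pM ?mu w m" if w: "w \<in> W" and m: "m \<in> M" for w m
  proof
    assume "blocking W M pW pM ?mu w m"
    then have w_prefers: "(m, ?mu w) \<in> pW w" and m_prefers: "(w, ?t m) \<in> pM m"
      unfolding blocking_def using inv_into_inv_into_eq[OF t m] by auto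
    have "w \<notin> P m"
    proof
      assume "w \<in> P m"
      moreover have "w \<noteq> ?t m"
        using m_prefers strict_linear_order_on_irrefl[OF strict_linear_order_on_pM[OF m]] by auto
      ultimately have "(?t m, w) \<in> pM m"
        using proposal_best(2)[OF I m] by blast
      then show False
        using m_prefers strict_linear_order_on_asym[OF strict_linear_order_on_pM[OF m]] by simp
    qed
    then obtain m' where "m' \<in> M" "?t m' = w" "(m', m) \<in> pW w"
      using I w m unfolding deferred_acceptance_inv_def by blast
    moreover from this have "?mu w = m'"
      using inv_into_f_f[OF inj] by blast
    ultimately have "(m', m) \<in> pW w" "(m, m') \<in> pW w"
      using w_prefers by simp_all
    then show False
      using strict_linear_order_on_asym[OF strict_linear_order_on_pW[OF w]] by simp
  qed
  then show ?thesis
    unfolding stable_def using bij_betw_inv_into[OF t] by blast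
qed

text \<open>Woman w, proposed to by a and b, rejects b, the one she likes less.\<close>

lemma deferred_acceptance_step:
  assumes I: "deferred_acceptance_inv W M pW pM P" and a: "a \<in> M" and b: "b \<in> M" and "a \<noteq> b"
    and ta: "proposal pM P a = w" and tb: "proposal pM P b = w" and ab: "(a, b) \<in> pW w"
  shows "deferred_acceptance_inv W M pW pM (P(b := P b - {w}))"
proof -
  let ?P = "P(b := P b - {w})"
  have w: "w \<in> W"
    using proposal_in_W[OF I b] tb by simp
  have a_proposes: "?P a \<noteq> {} \<and> proposal pM ?P a = w"
    using ta \<open>a \<noteq> b\<close> deferred_acceptance_inv_nonempty[OF I a] unfolding proposal_def by simp
  show ?thesis
    unfolding deferred_acceptance_inv_def
  proof (intro conjI ballI impI)
    fix m assume "m \<in> M"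
    then show "?P m \<subseteq> W"
      using I unfolding deferred_acceptance_inv_def by auto
  next
    fix m w' assume m: "m \<in> M" and w': "w' \<in> W" and "w' \<notin> ?P m"
    show "\<exists>m'\<in>M. ?P m' \<noteq> {} \<and> proposal pM ?P m' = w' \<and> (m', m) \<in> pW w'"
    proof (cases "m = b \<and> w' = w")
      case True
      then show ?thesis
        using a a_proposes ab by blast
    next
      case False
      with \<open>w' \<notin> ?P m\<close> have "w' \<notin> P m"
        by (auto split: if_splits)
      then obtain m' where m': "m' \<in> M" "P m' \<noteq> {}" "proposal pM P m' = w'" "(m', m) \<in> pW w'"
        using I m w' unfolding deferred_acceptance_inv_def by blast
      show ?thesis
      proof (cases "m' = b")
        case False
        then show ?thesis
          using m' unfolding proposal_def by (intro bexI[of _ m']) auto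
      next
        case True
        then have "w' = w" and "(a, m) \<in> pW w"
          using m' tb strict_linear_order_on_trans[OF strict_linear_order_on_pW[OF w] ab] by auto
        then show ?thesis
          using a a_proposes by blast
      qed
    qed
  qed
qed

lemma deferred_acceptance_reject_decreases:
  assumes I: "deferred_acceptance_inv W M pW pM P" and b: "b \<in> M" and tb: "proposal pM P b = w"
  shows "(\<Sum>m\<in>M. card ((P(b := P b - {w})) m)) < (\<Sum>m\<in>M. card (P m))"
proof -
  have "finite (P b)"
    using I b finite_W finite_subset unfolding deferred_acceptance_inv_def by blast
  moreover have "w \<in> P b"
    using proposal_best(1)[OF I b] tb by simp
  ultimately have "card (P b - {w}) < card (P b)"
    by (rule card_Diff1_less)
  then show ?thesis
    using sum.remove[OF finite_M b, of "\<lambda>m. card ((P(b := P b - {w})) m)"]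
      sum.remove[OF finite_M b, of "\<lambda>m. card (P m)"]
    by simp
qed

lemma stable_exists_if_deferred_acceptance_inv:
  "deferred_acceptance_inv W M pW pM P \<Longrightarrow> \<exists>mu. stable W M pW pM mu"
proof (induction "\<Sum>m\<in>M. card (P m)" arbitrary: P rule: less_induct)
  case less
  show ?case
  proof (cases "inj_on (proposal pM P) M")
    case True
    then show ?thesis
      using stable_if_proposals_inj[OF less.prems] by blast
  next
    case False
    then obtain m1 m2 where m: "m1 \<in> M" "m2 \<in> M" "m1 \<noteq> m2" "proposal pM P m1 = proposal pM P m2"
      unfolding inj_on_def by blast
    define w where "w = proposal pM P m1"
    have "w \<in> W"
      using proposal_in_W[OF less.prems m(1)] unfolding w_def .
    then have "(m1, m2) \<in> pW w \<or> (m2, m1) \<in> pW w"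
      using strict_linear_order_on_total[OF strict_linear_order_on_pW] m by blast
    then obtain a b where "a \<in> M" "b \<in> M" "a \<noteq> b" "proposal pM P a = w" "proposal pM P b = w" "(a, b) \<in> pW w"
      using m w_def by metis
    note rejection = this
    show ?thesis
      by (rule less.hyps[OF deferred_acceptance_reject_decreases[OF less.prems rejection(2,5)]
            deferred_acceptance_step[OF less.prems rejection]])
  qed
qed

lemma stable_exists: "\<exists>mu. stable W M pW pM mu"
  by (rule stable_exists_if_deferred_acceptance_inv[of "\<lambda>_. W"]) (simp add: deferred_acceptance_inv_def)

end

lemma married_in_some_every_iff:
  assumes "finite W" "finite M" "card W = card M" "pW \<in> profiles W M" "pM \<in> profiles M W"
    and "\<And>mu. stable W M pW pM mu \<Longrightarrow> mu w = m \<longleftrightarrow> Q"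
  shows "married_in_some W M w m pW pM \<longleftrightarrow> Q" and "married_in_every W M w m pW pM \<longleftrightarrow> Q"
  using stable_exists[OF assms(1-5)] assms(6) unfolding married_in_some_def married_in_every_def by blast+

section \<open>Stable matchings on indices\<close>

text \<open>Women and men are both numbered 0, ..., n - 1. Woman i ranks man j by the pair (tw i j, j)
  in lexicographic order, i.e.\ by the rank class tw i j with ties broken by index; likewise man j
  ranks woman i by (tm j i, i). The matching is given by s (husband) and its inverse t (wife).\<close>

definition index_stable ::
  "nat \<Rightarrow> (nat \<Rightarrow> nat \<Rightarrow> nat) \<Rightarrow> (nat \<Rightarrow> nat \<Rightarrow> nat) \<Rightarrow> (nat \<Rightarrow> nat) \<Rightarrow> (nat \<Rightarrow> nat) \<Rightarrow> bool" where
  "index_stable n tw tm s t \<longleftrightarrow>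
     (\<forall>i<n. s i < n \<and> t (s i) = i) \<and> (\<forall>j<n. t j < n \<and> s (t j) = j) \<and>
     (\<forall>i<n. \<forall>j<n. \<not> ((tw i j, j) < (tw i (s i), s i) \<and> (tm j i, i) < (tm j (t j), t j)))"

context
  fixes n tw tm s t
  assumes stable: "index_stable n tw tm s t"
begin

lemma husband_less: "i < n \<Longrightarrow> s i < n"
  using stable unfolding index_stable_def by auto

lemma husband_eq_iff: "i < n \<Longrightarrow> j < n \<Longrightarrow> s i = j \<longleftrightarrow> t j = i"
  using stable unfolding index_stable_def by metis

lemma husband_inj: "i < n \<Longrightarrow> i' < n \<Longrightarrow> s i = s i' \<Longrightarrow> i = i'"
  using stable unfolding index_stable_def by metis

lemma husband_wife: "j < n \<Longrightarrow> s (t j) = j"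
  using stable unfolding index_stable_def by auto

lemma no_blocking_rank: "i < n \<Longrightarrow> j < n \<Longrightarrow> tw i j < tw i (s i) \<Longrightarrow> tm j i < tm j (t j) \<Longrightarrow> False"
  using stable unfolding index_stable_def by auto

lemma rank_of_husband_le: "i < n \<Longrightarrow> j < n \<Longrightarrow> tm j i < tm j (t j) \<Longrightarrow> tw i (s i) \<le> tw i j"
  using no_blocking_rank not_less by blast

lemma rank_of_wife_le: "i < n \<Longrightarrow> j < n \<Longrightarrow> tw i j < tw i (s i) \<Longrightarrow> tm j (t j) \<le> tm j i"
  using no_blocking_rank not_less by blast

lemma mutual_first_choices_married:
  assumes "i < n" "j < n" "\<And>j'. j' \<noteq> j \<Longrightarrow> tw i j < tw i j'" "\<And>i'. i' \<noteq> i \<Longrightarrow> tm j i < tm j i'"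
  shows "s i = j"
  using assms no_blocking_rank husband_eq_iff by metis

end

definition low :: "nat \<Rightarrow> nat \<Rightarrow> bool" where
  "low k x \<longleftrightarrow> 2 \<le> x \<and> x < k + 2"

definition high :: "nat \<Rightarrow> nat \<Rightarrow> bool" where
  "high k x \<longleftrightarrow> k + 2 \<le> x \<and> x < 2 * k + 2"

lemma not_low_high_less_2 [simp]: "x < 2 \<Longrightarrow> \<not> low k x" "x < 2 \<Longrightarrow> \<not> high k x"
  unfolding low_def high_def by auto

lemma low_iff: "low k x \<longleftrightarrow> (\<exists>a<k. x = 2 + a)"
  unfolding low_def by presburger

lemma high_iff: "high k x \<longleftrightarrow> (\<exists>a<k. x = 2 + k + a)"
  unfolding high_def by presburger

definition table :: "nat \<Rightarrow> (nat \<times> nat) set \<Rightarrow> nat \<Rightarrow> (nat \<Rightarrow> nat \<Rightarrow> nat) \<Rightarrow> nat \<Rightarrow> nat \<Rightarrow> nat" where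
  "table k R c special i j =
     (if low k i then (if low k j \<and> (i - 2, j - 2) \<in> R then 0 else if j = i + k then 1 else 2)
      else if high k i then (if j = i - k then 0 else if j = c then 1 else 2)
      else if i < 2 then special i j
      else if j = i then 0 else 1)"

lemma table_low: "low k i \<Longrightarrow> table k R c sp i j = (if low k j \<and> (i - 2, j - 2) \<in> R then 0 else if j = i + k then 1 else 2)"
  by (simp add: table_def)

lemma table_high: "high k i \<Longrightarrow> table k R c sp i j = (if j = i - k then 0 else if j = c then 1 else 2)"
  unfolding table_def low_def high_def by auto

lemma table_special: "i < 2 \<Longrightarrow> table k R c sp i j = sp i j"
  unfolding table_def low_def high_def by auto

lemma table_other: "2 \<le> i \<Longrightarrow> \<not> low k i \<Longrightarrow> \<not> high k i \<Longrightarrow> table k R c sp i j = (if j = i then 0 else 1)"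
  unfolding table_def by auto

lemma low_block_married_to_high:
  assumes stable: "index_stable n (table k A cw sw) (table k (B\<inverse>) cm sm) s t"
    and n: "2 * k + 2 \<le> n" and AB: "A \<inter> B = {}" and a: "a < k"
  shows "s (2 + a) = 2 + k + a"
proof (rule ccontr)
  let ?tw = "table k A cw sw" and ?tm = "table k (B\<inverse>) cm sm"
  assume ne: "s (2 + a) \<noteq> 2 + k + a"
  define u where "u = 2 + a"
  have u: "u < n" "low k u" "high k (u + k)" "u + k < n" "s u \<noteq> u + k"
    using a n ne unfolding u_def low_def high_def by (auto simp: add.commute add.left_commute)
  then have "t (u + k) \<noteq> u"
    using husband_eq_iff[OF stable u(1) u(4)] by auto
  then have "?tm (u + k) u < ?tm (u + k) (t (u + k))"
    using u by (simp add: table_high)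
  then have "?tw u (s u) \<le> ?tw u (u + k)"
    using rank_of_husband_le[OF stable u(1) u(4)] by blast
  then obtain j where j: "s u = j" "low k j" "(a, j - 2) \<in> A"
    using u by (auto simp: table_low u_def split: if_splits)
  have "j < n" "high k (j + k)" "j + k < n" "u \<noteq> j + k"
    using j n u unfolding low_def high_def by auto
  have "t j = u"
    using husband_eq_iff[OF stable u(1) \<open>j < n\<close>] j by simp
  then have "s (j + k) \<noteq> j"
    using husband_eq_iff[OF stable \<open>j + k < n\<close> \<open>j < n\<close>] u j unfolding low_def by auto
  then have "?tw (j + k) j < ?tw (j + k) (s (j + k))"
    using \<open>high k (j + k)\<close> by (simp add: table_high)
  then have "?tm j (t j) \<le> ?tm j (j + k)"
    using rank_of_wife_le[OF stable \<open>j + k < n\<close> \<open>j < n\<close>] by blast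
  then have "(a, j - 2) \<in> B"
    using \<open>t j = u\<close> \<open>u \<noteq> j + k\<close> j u by (auto simp: table_low u_def split: if_splits)
  then show False
    using j AB by auto
qed

lemma high_block_married_to_low:
  assumes stable: "index_stable n (table k A cw sw) (table k (B\<inverse>) cm sm) s t"
    and n: "2 * k + 2 \<le> n" and low_married: "\<And>a. a < k \<Longrightarrow> s (2 + a) = 2 + k + a" and b: "b < k"
  shows "s (2 + k + b) = 2 + b"
proof (rule ccontr)
  let ?tw = "table k A cw sw" and ?tm = "table k (B\<inverse>) cm sm"
  assume ne: "s (2 + k + b) \<noteq> 2 + b"
  define j where "j = 2 + b"
  have j: "j < n" "low k j" "high k (j + k)" "j + k < n" "s (j + k) \<noteq> j"
    using b n ne unfolding j_def low_def high_def by (auto simp: add.commute add.left_commute)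
  then have "?tw (j + k) j < ?tw (j + k) (s (j + k))"
    by (simp add: table_high)
  then have "?tm j (t j) \<le> ?tm j (j + k)"
    using rank_of_wife_le[OF stable j(4) j(1)] by blast
  moreover have "t j \<noteq> j + k"
    using husband_eq_iff[OF stable j(4) j(1)] j(5) by auto
  ultimately have "low k (t j)"
    using j by (auto simp: table_low split: if_splits)
  then obtain a where "t j = 2 + a" "a < k"
    unfolding low_iff by blast
  then have "s (t j) = t j + k"
    using low_married by (simp add: add.commute add.left_commute)
  then show False
    using husband_wife[OF stable j(1)] \<open>low k (t j)\<close> j unfolding low_def by auto
qed

lemma cross_married_no_common_pair:
  assumes stable: "index_stable n (table k A cw sw) (table k (B\<inverse>) cm sm) s t"
    and n: "2 * k + 2 \<le> n" and "a < k" "b < k"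
    and low_married: "s (2 + a) = 2 + k + a" and high_married: "s (2 + k + b) = 2 + b"
  shows "(a, b) \<notin> A \<inter> B"
proof
  assume ab: "(a, b) \<in> A \<inter> B"
  define u j where "u = 2 + a" and "j = 2 + b"
  have lt: "u < n" "j < n" "j + k < n"
    using assms unfolding u_def j_def by auto
  have "t j = j + k"
    using husband_eq_iff[OF stable lt(3,2)] high_married unfolding j_def by (simp add: add_ac)
  moreover have "s u = u + k"
    using low_married unfolding u_def by (simp add: add_ac)
  ultimately have "table k A cw sw u j < table k A cw sw u (s u)"
    and "table k (B\<inverse>) cm sm j u < table k (B\<inverse>) cm sm j (t j)"
    using ab \<open>a < k\<close> \<open>b < k\<close> unfolding u_def j_def by (auto simp: table_low low_def)
  then show False
    using no_blocking_rank[OF stable lt(1,2)] by blast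
qed

definition disj_table :: "nat \<Rightarrow> (nat \<times> nat) set \<Rightarrow> nat \<Rightarrow> nat \<Rightarrow> nat" where
  "disj_table k R = table k R 0
     (\<lambda>i j. if i = 0 then (if high k j then 0 else if j = 0 then 1 else 2) else if j = i then 0 else 1)"

definition meet_women_table :: "nat \<Rightarrow> (nat \<times> nat) set \<Rightarrow> nat \<Rightarrow> nat \<Rightarrow> nat" where
  "meet_women_table k A = table k A 0
     (\<lambda>i j. if i = 0 then (if j = 0 then 0 else 1) else if high k j then 0 else if j = 0 then 1 else 2)"

definition meet_men_table :: "nat \<Rightarrow> (nat \<times> nat) set \<Rightarrow> nat \<Rightarrow> nat \<Rightarrow> nat" where
  "meet_men_table k B = table k (B\<inverse>) 1
     (\<lambda>j i. if j = 0 then (if i = 1 then 0 else if i = 0 then 1 else 2) else 0)"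

lemma disj_table_other:
  "x \<noteq> 0 \<Longrightarrow> \<not> low k x \<Longrightarrow> \<not> high k x \<Longrightarrow> disj_table k R x y = (if y = x then 0 else 1)"
  unfolding disj_table_def by (cases "x < 2") (auto simp: table_special table_other)

lemma index_stable_disj_married:
  assumes stable: "index_stable n (disj_table k A) (disj_table k (B\<inverse>)) s t"
    and n: "2 * k + 2 \<le> n" and AB: "A \<inter> B = {}"
  shows "s 0 = 0"
proof (rule ccontr)
  assume "s 0 \<noteq> 0"
  note stable' = stable[unfolded disj_table_def]
  have "s 0 < n"
    using husband_less[OF stable] n by simp
  \<comment> \<open>the man s 0 is also married to another woman: to one of the opposite block if he is
    low or high, and to his namesake otherwise\<close>
  consider "low k (s 0)" | "high k (s 0)" | "\<not> low k (s 0)" "\<not> high k (s 0)"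
    by blast
  then have "\<exists>i<n. i \<noteq> 0 \<and> s i = s 0"
  proof cases
    case 1
    then obtain b where "s 0 = 2 + b" "b < k"
      unfolding low_iff by blast
    moreover from this have "s (2 + k + b) = 2 + b"
      using high_block_married_to_low[OF stable' n low_block_married_to_high[OF stable' n AB]] by blast
    ultimately show ?thesis
      using n by (intro exI[of _ "2 + k + b"]) simp
  next
    case 2
    then obtain a where "s 0 = 2 + k + a" "a < k"
      unfolding high_iff by blast
    moreover from this have "s (2 + a) = 2 + k + a"
      using low_block_married_to_high[OF stable' n AB] by blast
    ultimately show ?thesis
      using n by (intro exI[of _ "2 + a"]) simp
  next
    case 3
    then have "s (s 0) = s 0"
      using \<open>s 0 \<noteq> 0\<close> \<open>s 0 < n\<close>
      by (intro mutual_first_choices_married[OF stable]) (auto simp: disj_table_other)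
    then show ?thesis
      using \<open>s 0 \<noteq> 0\<close> \<open>s 0 < n\<close> by blast
  qed
  then obtain i where "i < n" "i \<noteq> 0" "s i = s 0"
    by blast
  then show False
    using husband_inj[OF stable \<open>i < n\<close>, of 0] n by simp
qed

lemma index_stable_disj_not_married:
  assumes stable: "index_stable n (disj_table k A) (disj_table k (B\<inverse>)) s t"
    and n: "2 * k + 2 \<le> n" and ab: "(a, b) \<in> A" "(a, b) \<in> B" "a < k" "b < k"
  shows "s 0 \<noteq> 0"
proof
  let ?tw = "disj_table k A" and ?tm = "disj_table k (B\<inverse>)"
  assume s0: "s 0 = 0"
  have "0 < n"
    using n by simp
  then have t0: "t 0 = 0"
    using husband_eq_iff[OF stable] s0 by blast
  define u j where "u = 2 + a" and "j = 2 + b"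
  have lt: "u < n" "u + k < n" "j + k < n" and in_high: "high k (u + k)" "high k (j + k)"
    using ab n unfolding u_def j_def low_def high_def by auto
  \<comment> \<open>woman 0 and man 0 prefer the high block, whose members therefore marry their low partners\<close>
  have su: "s u = u + k"
  proof (rule ccontr)
    assume "s u \<noteq> u + k"
    then have "t (u + k) \<noteq> u" "t (u + k) \<noteq> 0"
      using husband_eq_iff[OF stable lt(1,2)] husband_eq_iff[OF stable \<open>0 < n\<close> lt(2)] s0 by auto
    then have "?tm (u + k) 0 < ?tm (u + k) (t (u + k))"
      using in_high(1) by (simp add: disj_table_def table_high)
    moreover have "?tw 0 (u + k) < ?tw 0 (s 0)"
      using s0 in_high(1) by (simp add: disj_table_def table_special)
    ultimately show False
      using no_blocking_rank[OF stable \<open>0 < n\<close> lt(2)] by blast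
  qed
  have sj: "s (j + k) = j"
  proof (rule ccontr)
    assume "s (j + k) \<noteq> j"
    moreover have "s (j + k) \<noteq> 0"
      using husband_inj[OF stable lt(3) \<open>0 < n\<close>] s0 in_high(2) unfolding high_def by auto
    ultimately have "?tw (j + k) 0 < ?tw (j + k) (s (j + k))"
      using in_high(2) by (simp add: disj_table_def table_high)
    moreover have "?tm 0 (j + k) < ?tm 0 (t 0)"
      using t0 in_high(2) by (simp add: disj_table_def table_special)
    ultimately show False
      using no_blocking_rank[OF stable lt(3) \<open>0 < n\<close>] by blast
  qed
  show False
    using cross_married_no_common_pair[OF stable[unfolded disj_table_def] n ab(3,4)] su sj ab(1,2)
    unfolding u_def j_def by (simp add: add_ac)
qed

lemma index_stable_meet_not_married:
  assumes stable: "index_stable n (meet_women_table k A) (meet_men_table k B) s t"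
    and n: "2 * k + 2 \<le> n" and AB: "A \<inter> B = {}"
  shows "s 0 \<noteq> 0"
proof
  assume s0: "s 0 = 0"
  note stable' = stable[unfolded meet_women_table_def meet_men_table_def]
  have "0 < n" "1 < n"
    using n by auto
  then have t0: "t 0 = 0"
    using husband_eq_iff[OF stable] s0 by blast
  have "s 1 \<noteq> 0"
    using husband_inj[OF stable \<open>1 < n\<close> \<open>0 < n\<close>] s0 by auto
  moreover have "\<not> high k (s 1)"
  proof
    assume "high k (s 1)"
    then obtain a where "s 1 = 2 + k + a" "a < k"
      unfolding high_iff by blast
    then show False
      using low_block_married_to_high[OF stable' n AB] husband_inj[OF stable, of "2 + a" 1] n by auto
  qed
  ultimately have "meet_women_table k A 1 0 < meet_women_table k A 1 (s 1)"
    by (simp add: meet_women_table_def table_special)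
  moreover have "meet_men_table k B 0 1 < meet_men_table k B 0 (t 0)"
    using t0 by (simp add: meet_men_table_def table_special)
  ultimately show False
    using no_blocking_rank[OF stable \<open>1 < n\<close> \<open>0 < n\<close>] by blast
qed

lemma index_stable_meet_married:
  assumes stable: "index_stable n (meet_women_table k A) (meet_men_table k B) s t"
    and n: "2 * k + 2 \<le> n" and ab: "(a, b) \<in> A" "(a, b) \<in> B" "a < k" "b < k"
  shows "s 0 = 0"
proof (rule ccontr)
  let ?tw = "meet_women_table k A" and ?tm = "meet_men_table k B"
  note stable' = stable[unfolded meet_women_table_def meet_men_table_def]
  assume "s 0 \<noteq> 0"
  have "0 < n" "1 < n"
    using n by auto
  have "\<exists>a'<k. s (2 + a') \<noteq> 2 + k + a'"
  proof (rule ccontr)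
    assume "\<not> ?thesis"
    then have low_married: "\<And>a'. a' < k \<Longrightarrow> s (2 + a') = 2 + k + a'"
      by auto
    have "s (2 + k + b) = 2 + b"
      by (rule high_block_married_to_low[OF stable' n]) (use low_married ab(4) in auto)
    then show False
      using cross_married_no_common_pair[OF stable' n ab(3,4) low_married[OF ab(3)]] ab(1,2) by blast
  qed
  then obtain a' where a': "a' < k" "s (2 + a') \<noteq> 2 + k + a'"
    by blast
  define u where "u = 2 + a'"
  have u: "low k u" "s u \<noteq> u + k"
    using a' unfolding u_def low_def by (auto simp: add_ac)
  have lt: "u < n" "u + k < n" and "high k (u + k)"
    using u n unfolding low_def high_def by auto
  \<comment> \<open>the high man left alone by u makes woman 1 marry into the high block\<close>
  have "high k (s 1)"
  proof (cases "t (u + k) = 1")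
    case True
    then show ?thesis
      using husband_eq_iff[OF stable \<open>1 < n\<close> lt(2)] \<open>high k (u + k)\<close> by simp
  next
    case False
    moreover have "t (u + k) \<noteq> u"
      using husband_eq_iff[OF stable lt] u(2) by auto
    ultimately have "?tm (u + k) 1 < ?tm (u + k) (t (u + k))"
      using \<open>high k (u + k)\<close> by (simp add: meet_men_table_def table_high)
    then have "?tw 1 (s 1) \<le> ?tw 1 (u + k)"
      using rank_of_husband_le[OF stable \<open>1 < n\<close> lt(2)] by blast
    then show ?thesis
      using \<open>high k (u + k)\<close> by (auto simp: meet_women_table_def table_special split: if_splits)
  qed
  then have "s 1 \<noteq> 0"
    by (metis not_low_high_less_2(2) zero_less_numeral)
  then have "t 0 \<noteq> 0" "t 0 \<noteq> 1"
    using husband_eq_iff[OF stable \<open>0 < n\<close> \<open>0 < n\<close>] husband_eq_iff[OF stable \<open>1 < n\<close> \<open>0 < n\<close>]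
      \<open>s 0 \<noteq> 0\<close> by auto
  then have "?tw 0 0 < ?tw 0 (s 0)" "?tm 0 0 < ?tm 0 (t 0)"
    using \<open>s 0 \<noteq> 0\<close> by (simp_all add: meet_women_table_def meet_men_table_def table_special)
  then show False
    using no_blocking_rank[OF stable \<open>0 < n\<close> \<open>0 < n\<close>] by blast
qed

section \<open>Preference profiles from rank tables\<close>

text \<open>profiles W M need not be finite, since strict_linear_order_on M r does not confine r to
  M \<times> M; stability only sees the triples below, which range over a finite set.\<close>

definition pref_triples :: "'x set \<Rightarrow> 'y set \<Rightarrow> ('x \<Rightarrow> ('y \<times> 'y) set) \<Rightarrow> ('x \<times> 'y \<times> 'y) set" where
  "pref_triples W M p = {(w, m1, m2). w \<in> W \<and> m1 \<in> M \<and> m2 \<in> M \<and> (m1, m2) \<in> p w}"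

lemma finite_range_pref_triples:
  assumes "finite W" "finite M"
  shows "finite (range (pref_triples W M))"
proof (rule finite_subset)
  show "range (pref_triples W M) \<subseteq> Pow (W \<times> M \<times> M)"
    unfolding pref_triples_def by auto
qed (use assms in simp)

lemma stable_cong_pref_triples:
  assumes "pref_triples W M pW = pref_triples W M pW'"
  shows "stable W M pW pM = stable W M pW' pM"
proof
  fix mu
  have "(m, mu w) \<in> pW w \<longleftrightarrow> (m, mu w) \<in> pW' w" if "bij_betw mu W M" "w \<in> W" "m \<in> M" for w m
    using assms that bij_betw_apply[OF that(1,2)] unfolding pref_triples_def by (auto simp: set_eq_iff)
  then show "stable W M pW pM mu = stable W M pW' pM mu"
    unfolding stable_def blocking_def by auto
qed

lemma married_cong_pref_triples:
  assumes "pref_triples W M pW = pref_triples W M pW'"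
  shows "married_in_some W M w m pW pM = married_in_some W M w m pW' pM"
    and "married_in_every W M w m pW pM = married_in_every W M w m pW' pM"
  unfolding married_in_some_def married_in_every_def stable_cong_pref_triples[OF assms] by simp_all

definition table_pref :: "'x set \<Rightarrow> 'y set \<Rightarrow> ('x \<Rightarrow> nat) \<Rightarrow> ('y \<Rightarrow> nat) \<Rightarrow> (nat \<Rightarrow> nat \<Rightarrow> nat) \<Rightarrow> 'x \<Rightarrow> ('y \<times> 'y) set" where
  "table_pref X Y iX iY tt x = (if x \<in> X then
     {(y1, y2). y1 \<in> Y \<and> y2 \<in> Y \<and> (tt (iX x) (iY y1), iY y1) < (tt (iX x) (iY y2), iY y2)} else {})"

lemma strict_linear_order_on_less_key:
  fixes key :: "'a \<Rightarrow> 'b :: linorder"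
  assumes "inj_on key Y"
  shows "strict_linear_order_on Y {(y1, y2). y1 \<in> Y \<and> y2 \<in> Y \<and> key y1 < key y2}"
  unfolding strict_linear_order_on_def trans_def irrefl_def total_on_def
proof (intro conjI allI ballI impI)
  fix y1 y2 assume "y1 \<in> Y" "y2 \<in> Y" "y1 \<noteq> y2"
  then have "key y1 \<noteq> key y2"
    using assms by (auto dest: inj_onD)
  then show "(y1, y2) \<in> {(y1, y2). y1 \<in> Y \<and> y2 \<in> Y \<and> key y1 < key y2} \<or>
      (y2, y1) \<in> {(y1, y2). y1 \<in> Y \<and> y2 \<in> Y \<and> key y1 < key y2}"
    using \<open>y1 \<in> Y\<close> \<open>y2 \<in> Y\<close> by (simp add: neq_iff)
qed (auto dest: less_trans)

lemma table_pref_in_profiles: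
  assumes "inj_on iY Y"
  shows "table_pref X Y iX iY tt \<in> profiles X Y"
proof -
  have "inj_on (\<lambda>y. (tt (iX x) (iY y), iY y)) Y" for x
    using assms unfolding inj_on_def by simp
  then show ?thesis
    unfolding profiles_def table_pref_def
    by (auto simp del: less_prod_simp intro: strict_linear_order_on_less_key)
qed

lemma index_stable_if_stable:
  assumes iW: "bij_betw iW W {..<n}" and iM: "bij_betw iM M {..<n}"
    and stable: "stable W M (table_pref W M iW iM tw) (table_pref M W iM iW tm) mu"
  shows "index_stable n tw tm (\<lambda>i. iM (mu (inv_into W iW i))) (\<lambda>j. iW (inv_into W mu (inv_into M iM j)))"
proof -
  let ?fW = "inv_into W iW" and ?fM = "inv_into M iM" and ?nu = "inv_into W mu"
  have mu: "bij_betw mu W M"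
    using stable unfolding stable_def by simp
  note bijs = iW iM mu bij_betw_inv_into[OF iW] bij_betw_inv_into[OF iM] bij_betw_inv_into[OF mu]
  note simps = bijs[THEN bij_betw_apply] bijs[THEN bij_betw_inv_into_left] bijs[THEN bij_betw_inv_into_right]
  show ?thesis
    unfolding index_stable_def
  proof (intro conjI allI impI)
    fix i j assume "i < n" "j < n"
    then have "\<not> blocking W M (table_pref W M iW iM tw) (table_pref M W iM iW tm) mu (?fW i) (?fM j)"
      using stable simps unfolding stable_def by auto
    then show "\<not> ((tw i j, j) < (tw i (iM (mu (?fW i))), iM (mu (?fW i))) \<and>
        (tm j i, i) < (tm j (iW (?nu (?fM j))), iW (?nu (?fM j))))"
      using \<open>i < n\<close> \<open>j < n\<close> simps unfolding blocking_def table_pref_def by (auto simp del: less_prod_simp)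
  qed (use simps in auto)
qed

section \<open>Reduction from set disjointness\<close>

lemma obtain_bij_betw_lessThan_card:
  assumes "finite W" "w \<in> W"
  obtains iW where "bij_betw iW W {..<card W}" "iW w = 0"
proof -
  obtain f where "bij_betw f {..<card W} W"
    using ex_bij_betw_nat_finite[OF assms(1)] by (auto simp: atLeast0LessThan)
  then have g: "bij_betw (inv_into {..<card W} f) W {..<card W}"
    by (rule bij_betw_inv_into)
  let ?iW = "transpose 0 (inv_into {..<card W} f w) \<circ> inv_into {..<card W} f"
  have "0 < card W"
    using assms card_gt_0_iff by blast
  then have "bij_betw ?iW W {..<card W}"
    using g assms(2) by (intro bij_betw_trans[OF g]) (auto dest: bij_betw_apply)
  then show ?thesis
    using that by simp
qed

context
  fixes W :: "'x set" and M :: "'y set" and w m and iW :: "'x \<Rightarrow> nat" and iM :: "'y \<Rightarrow> nat" and n :: nat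
  assumes iW: "bij_betw iW W {..<n}" and iM: "bij_betw iM M {..<n}"
    and w: "w \<in> W" "iW w = 0" and m: "m \<in> M" "iM m = 0"
begin

lemma married_iff_index_married:
  assumes "\<And>s t. index_stable n tw tm s t \<Longrightarrow> s 0 = 0 \<longleftrightarrow> Q"
  shows "married_in_some W M w m (table_pref W M iW iM tw) (table_pref M W iM iW tm) \<longleftrightarrow> Q"
    and "married_in_every W M w m (table_pref W M iW iM tw) (table_pref M W iM iW tm) \<longleftrightarrow> Q"
proof -
  have married_iff: "mu w = m \<longleftrightarrow> Q"
    if stable: "stable W M (table_pref W M iW iM tw) (table_pref M W iM iW tm) mu" for mu
  proof -
    have "bij_betw mu W M"
      using stable unfolding stable_def by (rule conjunct1)
    then have "mu w \<in> M"
      using w(1) by (rule bij_betw_apply)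
    have "inv_into W iW 0 = w"
      using bij_betw_inv_into_left[OF iW w(1)] w(2) by simp
    then have "iM (mu (inv_into W iW 0)) = 0 \<longleftrightarrow> iM (mu w) = iM m"
      using m(2) by simp
    also have "\<dots> \<longleftrightarrow> mu w = m"
      using inj_on_eq_iff[OF bij_betw_imp_inj_on[OF iM] \<open>mu w \<in> M\<close> m(1)] .
    finally show ?thesis
      using assms[OF index_stable_if_stable[OF iW iM stable]] by simp
  qed
  have finite: "finite W" "finite M" and card: "card W = card M"
    using bij_betw_finite[OF iW] bij_betw_finite[OF iM] bij_betw_same_card[OF iW] bij_betw_same_card[OF iM]
    by simp_all
  have "inj_on iW W" "inj_on iM M"
    using iW iM by (simp_all add: bij_betw_def)
  note profiles = table_pref_in_profiles[OF \<open>inj_on iM M\<close>] table_pref_in_profiles[OF \<open>inj_on iW W\<close>]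
  show "married_in_some W M w m (table_pref W M iW iM tw) (table_pref M W iM iW tm) \<longleftrightarrow> Q"
    by (rule married_in_some_every_iff(1)[OF finite card profiles]) (rule married_iff)
  show "married_in_every W M w m (table_pref W M iW iM tw) (table_pref M W iM iW tm) \<longleftrightarrow> Q"
    by (rule married_in_some_every_iff(2)[OF finite card profiles]) (rule married_iff)
qed

lemma married_iff_disjoint:
  assumes n: "2 * k + 2 \<le> n" and A: "A \<subseteq> {..<k} \<times> {..<k}"
  shows "married_in_some W M w m (table_pref W M iW iM (disj_table k A)) (table_pref M W iM iW (disj_table k (B\<inverse>)))
           \<longleftrightarrow> A \<inter> B = {}"
    and "married_in_every W M w m (table_pref W M iW iM (disj_table k A)) (table_pref M W iM iW (disj_table k (B\<inverse>)))
           \<longleftrightarrow> A \<inter> B = {}"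
proof -
  have index_iff: "s 0 = 0 \<longleftrightarrow> A \<inter> B = {}" if "index_stable n (disj_table k A) (disj_table k (B\<inverse>)) s t" for s t
    using index_stable_disj_married[OF that n] index_stable_disj_not_married[OF that n] A by blast
  show "married_in_some W M w m (table_pref W M iW iM (disj_table k A)) (table_pref M W iM iW (disj_table k (B\<inverse>)))
           \<longleftrightarrow> A \<inter> B = {}"
    by (rule married_iff_index_married(1)) (rule index_iff)
  show "married_in_every W M w m (table_pref W M iW iM (disj_table k A)) (table_pref M W iM iW (disj_table k (B\<inverse>)))
           \<longleftrightarrow> A \<inter> B = {}"
    by (rule married_iff_index_married(2)) (rule index_iff)
qed

lemma married_iff_meet:
  assumes n: "2 * k + 2 \<le> n" and A: "A \<subseteq> {..<k} \<times> {..<k}"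
  shows "married_in_some W M w m (table_pref W M iW iM (meet_women_table k A)) (table_pref M W iM iW (meet_men_table k B))
           \<longleftrightarrow> A \<inter> B \<noteq> {}"
    and "married_in_every W M w m (table_pref W M iW iM (meet_women_table k A)) (table_pref M W iM iW (meet_men_table k B))
           \<longleftrightarrow> A \<inter> B \<noteq> {}"
proof -
  have index_iff: "s 0 = 0 \<longleftrightarrow> A \<inter> B \<noteq> {}" if "index_stable n (meet_women_table k A) (meet_men_table k B) s t" for s t
    using index_stable_meet_married[OF that n] index_stable_meet_not_married[OF that n] A by blast
  show "married_in_some W M w m (table_pref W M iW iM (meet_women_table k A)) (table_pref M W iM iW (meet_men_table k B))
           \<longleftrightarrow> A \<inter> B \<noteq> {}"
    by (rule married_iff_index_married(1)) (rule index_iff)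
  show "married_in_every W M w m (table_pref W M iW iM (meet_women_table k A)) (table_pref M W iM iW (meet_men_table k B))
           \<longleftrightarrow> A \<inter> B \<noteq> {}"
    by (rule married_iff_index_married(2)) (rule index_iff)
qed

lemma ncc_married_ge:
  assumes n: "2 * k + 2 \<le> n"
  shows "k * k \<le> ncc (profiles W M) (profiles M W) (married_in_some W M w m) + 1"
    and "k * k \<le> ncc (profiles W M) (profiles M W) (married_in_every W M w m) + 1"
    and "k * k \<le> concc (profiles W M) (profiles M W) (married_in_some W M w m) + 1"
    and "k * k \<le> concc (profiles W M) (profiles M W) (married_in_every W M w m) + 1"
proof -
  define U where "U = {..<k} \<times> {..<k}"
  have U: "finite U" "card U = k * k"
    unfolding U_def by (simp_all add: card_cartesian_product)
  have "finite W" "finite M"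
    using bij_betw_finite[OF iW] bij_betw_finite[OF iM] by simp_all
  then have range: "finite (pref_triples W M ` profiles W M)"
    by (rule finite_subset[OF image_mono[OF subset_UNIV] finite_range_pref_triples])
  have "inj_on iW W" "inj_on iM M"
    using iW iM by (simp_all add: bij_betw_def)
  then have profiles: "table_pref W M iW iM tw \<in> profiles W M" "table_pref M W iM iW tm \<in> profiles M W" for tw tm
    by (simp_all add: table_pref_in_profiles)
  note cong = married_cong_pref_triples[of W M]
  let ?disjW = "\<lambda>A. table_pref W M iW iM (disj_table k A)"
    and ?disjM = "\<lambda>B. table_pref M W iM iW (disj_table k (B\<inverse>))"
    and ?meetW = "\<lambda>A. table_pref W M iW iM (meet_women_table k A)"
    and ?meetM = "\<lambda>B. table_pref M W iM iW (meet_men_table k B)"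
  have "card U \<le> ncc (profiles W M) (profiles M W) (married_in_some W M w m) + 1"
    by (rule ncc_ge_disjointness[where xf = ?disjW and yf = ?disjM, OF U(1) range])
      (auto simp: profiles married_iff_disjoint[OF n] U_def dest: cong)
  moreover have "card U \<le> ncc (profiles W M) (profiles M W) (married_in_every W M w m) + 1"
    by (rule ncc_ge_disjointness[where xf = ?disjW and yf = ?disjM, OF U(1) range])
      (auto simp: profiles married_iff_disjoint[OF n] U_def dest: cong)
  moreover have "card U \<le> concc (profiles W M) (profiles M W) (married_in_some W M w m) + 1"
    unfolding concc_def
    by (rule ncc_ge_disjointness[where xf = ?meetW and yf = ?meetM, OF U(1) range])
      (auto simp: profiles married_iff_meet[OF n] U_def dest: cong)
  moreover have "card U \<le> concc (profiles W M) (profiles M W) (married_in_every W M w m) + 1"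
    unfolding concc_def
    by (rule ncc_ge_disjointness[where xf = ?meetW and yf = ?meetM, OF U(1) range])
      (auto simp: profiles married_iff_meet[OF n] U_def dest: cong)
  ultimately show "k * k \<le> ncc (profiles W M) (profiles M W) (married_in_some W M w m) + 1"
    and "k * k \<le> ncc (profiles W M) (profiles M W) (married_in_every W M w m) + 1"
    and "k * k \<le> concc (profiles W M) (profiles M W) (married_in_some W M w m) + 1"
    and "k * k \<le> concc (profiles W M) (profiles M W) (married_in_every W M w m) + 1"
    using U(2) by simp_all
qed

end

lemma square_div_bound:
  assumes "8 \<le> n" and "((n - 2) div 2) * ((n - 2) div 2) \<le> c + 1"
  shows "1 / 16 * real n ^ 2 \<le> real c"
proof -
  define k where "k = (n - 2) div 2"
  have "n \<le> 2 * k + 3" "3 \<le> k"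
    using assms(1) unfolding k_def by auto
  then have "n * n \<le> (2 * k + 3) * (2 * k + 3)" and "3 * k \<le> k * k"
    by (intro mult_mono; simp)+
  moreover have "(2 * k + 3) * (2 * k + 3) = 4 * (k * k) + 12 * k + 9"
    by (simp add: algebra_simps)
  ultimately have "n * n \<le> 16 * c"
    using assms(2) \<open>3 \<le> k\<close> unfolding k_def[symmetric] by linarith
  then show ?thesis
    by (simp add: power2_eq_square flip: of_nat_mult)
qed

theorem theorem27:
  "\<exists>C::real. C > 0 \<and> (\<exists>N::nat. \<forall>n\<ge>N. \<forall>(W::nat set) (M::nat set) w m.
     card W = n \<and> card M = n \<and> finite W \<and> finite M \<and> W \<inter> M = {} \<and> w \<in> W \<and> m \<in> M \<longrightarrow>
       (let PW = profiles W M; PM = profiles M W;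
            fS = married_in_some W M w m; fE = married_in_every W M w m
        in C * real n ^ 2 \<le> real (ncc PW PM fS) \<and>
           C * real n ^ 2 \<le> real (concc PW PM fS) \<and>
           C * real n ^ 2 \<le> real (ncc PW PM fE) \<and>
           C * real n ^ 2 \<le> real (concc PW PM fE)))"
proof (intro exI[of _ "1/16"] conjI exI[of _ 8] allI impI)
  fix n :: nat and W M :: "nat set" and w m :: nat
  assume n: "8 \<le> n" and H: "card W = n \<and> card M = n \<and> finite W \<and> finite M \<and> W \<inter> M = {} \<and> w \<in> W \<and> m \<in> M"
  obtain iW where iW: "bij_betw iW W {..<n}" "iW w = 0"
    using obtain_bij_betw_lessThan_card[of W w] H by auto
  obtain iM where iM: "bij_betw iM M {..<n}" "iM m = 0"
    using obtain_bij_betw_lessThan_card[of M m] H by auto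
  define k where "k = (n - 2) div 2"
  have "2 * k + 2 \<le> n"
    using n unfolding k_def by simp
  note bounds = ncc_married_ge[OF iW(1) iM(1) _ iW(2) _ iM(2) this]
  show "let PW = profiles W M; PM = profiles M W;
            fS = married_in_some W M w m; fE = married_in_every W M w m
        in 1 / 16 * real n ^ 2 \<le> real (ncc PW PM fS) \<and>
           1 / 16 * real n ^ 2 \<le> real (concc PW PM fS) \<and>
           1 / 16 * real n ^ 2 \<le> real (ncc PW PM fE) \<and>
           1 / 16 * real n ^ 2 \<le> real (concc PW PM fE)"
    unfolding Let_def using H bounds[THEN square_div_bound[OF n, folded k_def]] by simp
qed simp

end
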